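(* Let $r,s,q$ be positive integers. There is a constant $c=c(r,s,q)>0$ such that the following holds. Let $V$ be a set of $N$ vertices and let $\gamma$ be a function assigning to every $r$-element subset $f\subset V$ a vector $\gamma(f)\in\mathbb{R}^s$. Suppose that for every $r$-element subset $f\subset V$ there are at most $q$ $r$-element subsets $f'\subset V$ with $|f\cap f'|=r-1$ such that $|\gamma(f)_i-\gamma(f')_i|<1$ for some $i\in[s]$. Then there is $U\subset V$ with $|U|\ge cN^{1/(2r-1)}$ such that $|\gamma(f)_i-\gamma(f')_i|\ge 1$ for every pair of distinct $r$-element subsets $f,f'\subset U$ and every $i\in[s]$. *)

theory Defs
  imports Complex_Main
begin

end

theory Submission
  imports Defs
begin

(*
  Take a uniformly random m-element subset W of V, where N = card V and m is of order
  (N / (6 s (q + 1)))^(1/(2r-1)), and count the close pairs (f, f') inside W: distinct r-sets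
  with |gamma(f)_i - gamma(f')_i| < 1 for some i < s.  Deleting a point x of f' - f turns a
  close pair into a pair (f, T) of an r-set and an (r-1)-set, and
  P(f \<union> f' \<subseteq> W) \<le> (m / N) P(f \<union> T \<subseteq> W).  At most 3 s (q + 1) close pairs
  give the same (f, T): for each coordinate i, the r-sets f' \<supseteq> T close to f in coordinate i
  fall into three classes according to the floor of gamma(f')_i, and two members of one class
  share T and are close, so the hypothesis bounds each class by q + 1.  As W contains at most
  m^(2r-1) pairs (f, T), it contains on average at most 3 s (q + 1) m^(2r) / N \<le> m / 2 close
  pairs, and deleting one vertex from each leaves a set of size at least m / 2 without any.
*)

lemma sum_card_filter_swap:
  assumes "finite A" "finite B"
  shows "(\<Sum>x\<in>A. card {y\<in>B. R x y}) = (\<Sum>y\<in>B. card {x\<in>A. R x y})"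
  using sum.swap_restrict[OF assms, of "\<lambda>_ _. 1::nat" R] by simp

lemma sum_comp_le_fibre_card:
  fixes h :: "'b \<Rightarrow> nat"
  assumes "finite B" "finite P" "g ` B \<subseteq> P" "\<And>y. y \<in> P \<Longrightarrow> card {x\<in>B. g x = y} \<le> K"
  shows "(\<Sum>x\<in>B. h (g x)) \<le> K * (\<Sum>y\<in>P. h y)"
proof -
  have "(\<Sum>x\<in>B. h (g x)) = (\<Sum>y\<in>g ` B. card {x\<in>B. g x = y} * h y)"
    using sum.image_gen[OF assms(1), of "\<lambda>x. h (g x)" g] by simp
  also have "\<dots> \<le> (\<Sum>y\<in>g ` B. K * h y)"
    using assms(3,4) by (intro sum_mono mult_right_mono) auto
  also have "\<dots> \<le> (\<Sum>y\<in>P. K * h y)"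
    using assms(2,3) by (intro sum_mono2) auto
  finally show ?thesis by (simp add: sum_distrib_left)
qed

lemma ex_mult_card_le_sum:
  fixes h :: "'a \<Rightarrow> nat"
  assumes "finite A" "A \<noteq> {}"
  shows "\<exists>x\<in>A. h x * card A \<le> sum h A"
proof (rule ccontr)
  assume "\<not> ?thesis"
  then have "(\<Sum>x\<in>A. sum h A) < (\<Sum>x\<in>A. h x * card A)"
    using assms by (intro sum_strict_mono) auto
  moreover have "(\<Sum>x\<in>A. h x * card A) = sum h A * card A"
    by (rule sum_distrib_right[symmetric])
  ultimately show False by (simp add: mult.commute)
qed

lemma card_subsets_le_power:
  assumes "finite W"
  shows "card {f. f \<subseteq> W \<and> card f = k} \<le> card W ^ k"
  using assms by (cases "k \<le> card W") (auto simp: n_subsets binomial_le_pow binomial_eq_0)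

lemma card_supsets_eq_binomial:
  assumes "finite V" "A \<subseteq> V" "card A \<le> m"
  shows "card {W. W \<subseteq> V \<and> card W = m \<and> A \<subseteq> W} = (card V - card A) choose (m - card A)"
proof -
  have "finite A" using assms finite_subset by blast
  have "bij_betw (\<lambda>W. W - A) {W. W \<subseteq> V \<and> card W = m \<and> A \<subseteq> W} {B. B \<subseteq> V - A \<and> card B = m - card A}"
  proof (rule bij_betw_byWitness[where f' = "\<lambda>B. B \<union> A"])
    show "(\<lambda>B. B \<union> A) ` {B. B \<subseteq> V - A \<and> card B = m - card A} \<subseteq> {W. W \<subseteq> V \<and> card W = m \<and> A \<subseteq> W}"
    proof clarify
      fix B assume B: "B \<subseteq> V - A" "card B = m - card A"
      then have "finite B" "B \<inter> A = {}"
        using assms(1) by (auto intro: finite_subset)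
      then show "B \<union> A \<subseteq> V \<and> card (B \<union> A) = m \<and> A \<subseteq> B \<union> A"
        using B assms \<open>finite A\<close> by (auto simp: card_Un_disjoint)
    qed
  qed (use \<open>finite A\<close> in \<open>auto simp: card_Diff_subset\<close>)
  then have "card {W. W \<subseteq> V \<and> card W = m \<and> A \<subseteq> W} = card {B. B \<subseteq> V - A \<and> card B = m - card A}"
    by (rule bij_betw_same_card)
  also have "\<dots> = card (V - A) choose (m - card A)"
    using assms by (simp add: n_subsets)
  finally show ?thesis
    using assms \<open>finite A\<close> by (simp add: card_Diff_subset)
qed

lemma binomial_Suc_Suc_ratio_le:
  assumes "k \<le> n"
  shows "(n + Suc a) * (n choose k) \<le> (k + Suc a) * (Suc n choose Suc k)"
proof -
  have eq: "Suc n * (n choose k) = Suc k * (Suc n choose Suc k)"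
    using Suc_times_binomial_eq[of n k] by (simp only: mult.commute)
  have "Suc k * (n choose k) \<le> Suc n * (n choose k)"
    using assms by simp
  then have "n choose k \<le> Suc n choose Suc k"
    unfolding eq by (metis mult_le_cancel1 zero_less_Suc)
  then have "a * (n choose k) \<le> a * (Suc n choose Suc k)"
    by (rule mult_le_mono2)
  with eq show ?thesis
    by (simp add: algebra_simps)
qed

lemma card_supsets_insert_le:
  assumes "finite V" "A \<subseteq> V" "x \<in> V" "x \<notin> A" "m \<le> card V"
  shows "card V * card {W. W \<subseteq> V \<and> card W = m \<and> insert x A \<subseteq> W}
         \<le> m * card {W. W \<subseteq> V \<and> card W = m \<and> A \<subseteq> W}"
proof (cases "card (insert x A) \<le> m")
  case False
  have "card (insert x A) \<le> card W" if "W \<subseteq> V" "insert x A \<subseteq> W" for W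
    using that assms(1) by (meson card_mono finite_subset)
  then have "{W. W \<subseteq> V \<and> card W = m \<and> insert x A \<subseteq> W} = {}"
    using False by auto
  then show ?thesis by (simp only: card.empty mult_0_right zero_le)
next
  case True
  have "finite A" using assms finite_subset by blast
  then have card_insert: "card (insert x A) = Suc (card A)" using assms by simp
  have "card (insert x A) \<le> card V" using assms by (intro card_mono) auto
  define n where "n = card V - Suc (card A)"
  define k where "k = m - Suc (card A)"
  have n: "card V = n + Suc (card A)" and k: "m = k + Suc (card A)" and "k \<le> n"
    using True card_insert \<open>card (insert x A) \<le> card V\<close> assms(5) by (simp_all add: n_def k_def)
  have "card {W. W \<subseteq> V \<and> card W = m \<and> insert x A \<subseteq> W} = n choose k"
    using card_supsets_eq_binomial[of V "insert x A" m] assms True card_insert n k by simp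
  moreover have "card {W. W \<subseteq> V \<and> card W = m \<and> A \<subseteq> W} = Suc n choose Suc k"
    using card_supsets_eq_binomial[of V A m] assms n k by simp
  ultimately show ?thesis
    using binomial_Suc_Suc_ratio_le[OF \<open>k \<le> n\<close>, of "card A"] n k by (simp add: algebra_simps)
qed

lemma ex_subset_containing_none:
  assumes "finite W" "finite E" "{} \<notin> E"
  shows "\<exists>U\<subseteq>W. card W \<le> card U + card E \<and> (\<forall>e\<in>E. \<not> e \<subseteq> U)"
proof -
  define X where "X = (\<lambda>e. SOME x. x \<in> e) ` E"
  have "card W - card X \<le> card (W - X)"
    using assms by (simp add: X_def diff_card_le_card_Diff)
  moreover have "card X \<le> card E"
    unfolding X_def using assms(2) by (rule card_image_le)
  moreover have "\<not> e \<subseteq> W - X" if "e \<in> E" for e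
  proof -
    have "(SOME x. x \<in> e) \<in> e" using assms(3) that by (metis ex_in_conv someI_ex)
    then show ?thesis using that by (auto simp: X_def)
  qed
  ultimately show ?thesis by (intro exI[of _ "W - X"]) auto
qed

lemma abs_diff_less_one_if_floor_eq:
  fixes x y :: real
  assumes "\<lfloor>x\<rfloor> = \<lfloor>y\<rfloor>"
  shows "\<bar>x - y\<bar> < 1"
  using assms floor_eq_iff[of x "\<lfloor>y\<rfloor>"] floor_eq_iff[of y "\<lfloor>y\<rfloor>"] by linarith

lemma card_Int_eq_if_common_subset:
  assumes "finite f" "finite f'" "card f' = card f" "f \<noteq> f'" "T \<subseteq> f \<inter> f'" "card T = card f - 1"
  shows "card (f \<inter> f') = card f - 1"
proof -
  have "\<not> f \<subseteq> f'"
    using assms card_subset_eq[of f' f] by metis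
  then have "card (f \<inter> f') < card f"
    using assms by (intro psubset_card_mono) auto
  moreover have "card T \<le> card (f \<inter> f')"
    using assms by (intro card_mono) auto
  ultimately show ?thesis using assms by linarith
qed

lemma floor_root_bounds:
  fixes N D :: real and k :: nat
  assumes "1 \<le> D" "0 < N" "0 < k"
  defines "m \<equiv> nat \<lfloor>(N / D) powr (1 / k)\<rfloor>"
  shows "D * real m ^ k \<le> N" and "N powr (1 / k) < (real m + 1) * D"
proof -
  define y where "y = (N / D) powr (1 / k)"
  have "0 < y" using assms by (simp add: y_def)
  then have m: "m \<le> y" "y < real m + 1"
    unfolding m_def y_def[symmetric] by linarith+
  have "y ^ k = N / D"
    using \<open>0 < y\<close> assms by (simp add: y_def powr_realpow[symmetric] powr_powr)
  moreover have "real m ^ k \<le> y ^ k"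
    using m by (intro power_mono) auto
  ultimately have "real m ^ k \<le> N / D" by simp
  then show "D * real m ^ k \<le> N"
    using assms by (simp add: field_simps)
  have "D powr (1 / k) \<le> D powr 1"
    using assms by (intro powr_mono) auto
  have "N powr (1 / k) = y * D powr (1 / k)"
    using assms by (simp add: y_def powr_divide)
  also have "\<dots> \<le> y * D"
    using \<open>D powr (1 / k) \<le> D powr 1\<close> \<open>0 < y\<close> assms by (intro mult_left_mono) auto
  also have "\<dots> < (real m + 1) * D"
    using m assms by (intro mult_strict_right_mono) auto
  finally show "N powr (1 / k) < (real m + 1) * D" .
qed

definition coord_close :: "('b \<Rightarrow> nat \<Rightarrow> real) \<Rightarrow> nat \<Rightarrow> 'b \<Rightarrow> 'b \<Rightarrow> bool" where
  "coord_close \<gamma> s f f' \<longleftrightarrow> (\<exists>i<s. \<bar>\<gamma> f i - \<gamma> f' i\<bar> < 1)"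

locale few_close_neighbours =
  fixes V :: "'a set" and \<gamma> :: "'a set \<Rightarrow> nat \<Rightarrow> real" and r s q :: nat
  assumes finite_V: "finite V" and r_pos: "0 < r"
    and few_neighbours: "\<And>f. f \<subseteq> V \<Longrightarrow> card f = r \<Longrightarrow>
      card {f'. f' \<subseteq> V \<and> card f' = r \<and> card (f \<inter> f') = r - 1 \<and> coord_close \<gamma> s f f'} \<le> q"
begin

lemma finite_subsets_V [simp]: "finite {f. f \<subseteq> V \<and> P f}"
  using finite_V by (auto intro: finite_subset[of _ "Pow V"])

lemma card_same_floor_le:
  assumes "i < s" "card T = r - 1"
  shows "card {f'. f' \<subseteq> V \<and> card f' = r \<and> T \<subseteq> f' \<and> \<lfloor>\<gamma> f' i\<rfloor> = k} \<le> q + 1"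
    (is "card ?C \<le> _")
proof (cases "?C = {}")
  case True
  then show ?thesis by (simp only: card.empty zero_le)
next
  case False
  then obtain f where f: "f \<in> ?C" by blast
  let ?N = "{f'. f' \<subseteq> V \<and> card f' = r \<and> card (f \<inter> f') = r - 1 \<and> coord_close \<gamma> s f f'}"
  have "?C - {f} \<subseteq> ?N"
  proof
    fix f' assume f': "f' \<in> ?C - {f}"
    then have "card (f \<inter> f') = r - 1"
      using f assms(2) finite_V card_Int_eq_if_common_subset[of f f' T]
      by (auto intro: finite_subset)
    moreover have "\<bar>\<gamma> f i - \<gamma> f' i\<bar> < 1"
      using f f' by (intro abs_diff_less_one_if_floor_eq) simp
    ultimately show "f' \<in> ?N"
      using f' assms(1) by (auto simp: coord_close_def)
  qed
  then have "card (?C - {f}) \<le> card ?N"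
    by (intro card_mono) simp
  also have "\<dots> \<le> q"
    using f by (intro few_neighbours) auto
  finally show ?thesis
    using f by (simp add: card_Diff_singleton)
qed

lemma card_close_supsets_le:
  assumes "card T = r - 1"
  shows "card {f'. f' \<subseteq> V \<and> card f' = r \<and> T \<subseteq> f' \<and> coord_close \<gamma> s f f'} \<le> 3 * s * (q + 1)"
proof -
  define C where "C i k = {f'. f' \<subseteq> V \<and> card f' = r \<and> T \<subseteq> f' \<and> \<lfloor>\<gamma> f' i\<rfloor> = k}" for i k
  define K where "K i = {\<lfloor>\<gamma> f i\<rfloor> - 1 .. \<lfloor>\<gamma> f i\<rfloor> + 1}" for i
  have "{f'. f' \<subseteq> V \<and> card f' = r \<and> T \<subseteq> f' \<and> coord_close \<gamma> s f f'} \<subseteq> (\<Union>i<s. \<Union>k\<in>K i. C i k)"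
  proof
    fix f' assume "f' \<in> {f'. f' \<subseteq> V \<and> card f' = r \<and> T \<subseteq> f' \<and> coord_close \<gamma> s f f'}"
    then obtain i where f': "f' \<subseteq> V" "card f' = r" "T \<subseteq> f'" and "i < s" "\<bar>\<gamma> f i - \<gamma> f' i\<bar> < 1"
      by (auto simp: coord_close_def)
    then have "\<lfloor>\<gamma> f' i\<rfloor> \<le> \<lfloor>\<gamma> f i + 1\<rfloor>" "\<lfloor>\<gamma> f i\<rfloor> \<le> \<lfloor>\<gamma> f' i + 1\<rfloor>"
      by (intro floor_mono; linarith)+
    then have "\<lfloor>\<gamma> f' i\<rfloor> \<in> K i"
      by (simp add: K_def)
    then show "f' \<in> (\<Union>i<s. \<Union>k\<in>K i. C i k)"
      using f' \<open>i < s\<close> by (auto simp: C_def)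
  qed
  then have "card {f'. f' \<subseteq> V \<and> card f' = r \<and> T \<subseteq> f' \<and> coord_close \<gamma> s f f'}
      \<le> card (\<Union>i<s. \<Union>k\<in>K i. C i k)"
    by (intro card_mono) (auto simp: C_def K_def)
  also have "\<dots> \<le> (\<Sum>i<s. \<Sum>k\<in>K i. card (C i k))"
    by (intro order_trans[OF card_UN_le] sum_mono card_UN_le) (auto simp: K_def)
  also have "\<dots> \<le> (\<Sum>i<s. \<Sum>k\<in>K i. q + 1)"
    unfolding C_def using assms by (intro sum_mono card_same_floor_le) auto
  also have "\<dots> = 3 * s * (q + 1)"
    by (simp add: K_def algebra_simps)
  finally show ?thesis .
qed

definition close_pairs :: "('a set \<times> 'a set) set" where
  "close_pairs = {(f, f'). f \<subseteq> V \<and> card f = r \<and> f' \<subseteq> V \<and> card f' = r \<and> f \<noteq> f' \<and> coord_close \<gamma> s f f'}"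

definition truncated_pairs :: "('a set \<times> 'a set) set" where
  "truncated_pairs = {f. f \<subseteq> V \<and> card f = r} \<times> {T. T \<subseteq> V \<and> card T = r - 1}"

definition new_point :: "'a set \<times> 'a set \<Rightarrow> 'a" where
  "new_point p = (SOME x. x \<in> snd p - fst p)"

definition shrink :: "'a set \<times> 'a set \<Rightarrow> 'a set \<times> 'a set" where
  "shrink p = (fst p, snd p - {new_point p})"

definition separated :: "'a set \<Rightarrow> bool" where
  "separated U \<longleftrightarrow> (\<forall>f f'. f \<subseteq> U \<and> card f = r \<and> f' \<subseteq> U \<and> card f' = r \<and> f \<noteq> f' \<longrightarrow>
     \<not> coord_close \<gamma> s f f')"

lemma finite_close_pairs: "finite close_pairs"
  unfolding close_pairs_def by (rule finite_subset[of _ "Pow V \<times> Pow V"]) (auto simp: finite_V)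

lemma finite_truncated_pairs: "finite truncated_pairs"
  by (simp add: truncated_pairs_def)

lemma new_point_mem:
  assumes "p \<in> close_pairs"
  shows "new_point p \<in> snd p - fst p"
proof -
  obtain f f' where p: "p = (f, f')" and "f \<subseteq> V" "card f' = card f" "f \<noteq> f'"
    using assms by (auto simp: close_pairs_def)
  moreover have "finite f"
    using \<open>f \<subseteq> V\<close> finite_V by (rule finite_subset)
  ultimately have "\<not> f' \<subseteq> f"
    using card_subset_eq[of f f'] by auto
  then have "\<exists>x. x \<in> snd p - fst p"
    unfolding p by auto
  then show ?thesis
    unfolding new_point_def by (rule someI_ex)
qed

lemma shrink_mem_truncated_pairs:
  assumes "p \<in> close_pairs"
  shows "shrink p \<in> truncated_pairs"
  using assms new_point_mem[OF assms] finite_V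
  by (auto simp: close_pairs_def truncated_pairs_def shrink_def card_Diff_singleton
      intro: finite_subset)

lemma union_shrink:
  assumes "p \<in> close_pairs"
  shows "fst p \<union> snd p = insert (new_point p) (fst (shrink p) \<union> snd (shrink p))"
    and "new_point p \<notin> fst (shrink p) \<union> snd (shrink p)"
  using new_point_mem[OF assms] by (auto simp: shrink_def)

lemma card_shrink_fibre_le:
  assumes "y \<in> truncated_pairs"
  shows "card {p \<in> close_pairs. shrink p = y} \<le> 3 * s * (q + 1)"
proof -
  obtain f T where y: "y = (f, T)" and T: "card T = r - 1"
    using assms by (auto simp: truncated_pairs_def)
  let ?F = "{f'. f' \<subseteq> V \<and> card f' = r \<and> T \<subseteq> f' \<and> coord_close \<gamma> s f f'}"
  have "{p \<in> close_pairs. shrink p = y} \<subseteq> Pair f ` ?F"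
    by (auto simp: close_pairs_def shrink_def y)
  then have "card {p \<in> close_pairs. shrink p = y} \<le> card (Pair f ` ?F)"
    by (intro card_mono) auto
  also have "\<dots> \<le> card ?F"
    by (intro card_image_le) simp
  also have "\<dots> \<le> 3 * s * (q + 1)"
    by (rule card_close_supsets_le[OF T])
  finally show ?thesis .
qed

lemma card_truncated_pairs_within_le:
  assumes "W \<subseteq> V"
  shows "card {y \<in> truncated_pairs. fst y \<union> snd y \<subseteq> W} \<le> card W ^ (2 * r - 1)"
proof -
  have "finite W" using assms finite_V by (rule finite_subset)
  have "{y \<in> truncated_pairs. fst y \<union> snd y \<subseteq> W} = {f. f \<subseteq> W \<and> card f = r} \<times> {T. T \<subseteq> W \<and> card T = r - 1}"
    using assms by (auto simp: truncated_pairs_def)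
  then have "card {y \<in> truncated_pairs. fst y \<union> snd y \<subseteq> W}
      = card {f. f \<subseteq> W \<and> card f = r} * card {T. T \<subseteq> W \<and> card T = r - 1}"
    by (simp add: card_cartesian_product)
  also have "\<dots> \<le> card W ^ r * card W ^ (r - 1)"
    using \<open>finite W\<close> by (intro mult_le_mono card_subsets_le_power)
  also have "\<dots> = card W ^ (2 * r - 1)"
    using r_pos by (simp add: mult_2 flip: power_add)
  finally show ?thesis .
qed

lemma power_double_r: "x ^ (2 * r) = x * x ^ (2 * r - 1)"
proof -
  have "2 * r = Suc (2 * r - 1)"
    using r_pos by simp
  then show ?thesis
    by (metis power_Suc)
qed

lemma sum_card_close_pairs_within_le:
  assumes "m \<le> card V"
  defines "Ws \<equiv> {W. W \<subseteq> V \<and> card W = m}"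
  shows "card V * (\<Sum>W\<in>Ws. card {p \<in> close_pairs. fst p \<union> snd p \<subseteq> W})
    \<le> card Ws * (3 * s * (q + 1) * m ^ (2 * r))"
proof -
  define n where "n A = card {W \<in> Ws. A \<subseteq> W}" for A
  have "finite Ws" by (simp add: Ws_def)
  have ratio: "card V * n (fst p \<union> snd p) \<le> m * n (fst (shrink p) \<union> snd (shrink p))"
    if "p \<in> close_pairs" for p
  proof -
    have "fst (shrink p) \<union> snd (shrink p) \<subseteq> V" "new_point p \<in> V"
      using that shrink_mem_truncated_pairs[OF that] new_point_mem[OF that]
      by (auto simp: truncated_pairs_def close_pairs_def)
    then show ?thesis
      using card_supsets_insert_le[OF finite_V _ _ union_shrink(2)[OF that] assms(1)]
      by (simp add: n_def Ws_def union_shrink(1)[OF that] conj_assoc)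
  qed
  have "card V * (\<Sum>W\<in>Ws. card {p \<in> close_pairs. fst p \<union> snd p \<subseteq> W})
      = (\<Sum>p\<in>close_pairs. card V * n (fst p \<union> snd p))"
    using sum_card_filter_swap[OF \<open>finite Ws\<close> finite_close_pairs, of "\<lambda>W p. fst p \<union> snd p \<subseteq> W"]
    by (simp add: n_def sum_distrib_left)
  also have "\<dots> \<le> (\<Sum>p\<in>close_pairs. m * n (fst (shrink p) \<union> snd (shrink p)))"
    by (intro sum_mono ratio)
  also have "\<dots> \<le> m * (3 * s * (q + 1) * (\<Sum>y\<in>truncated_pairs. n (fst y \<union> snd y)))"
    unfolding sum_distrib_left[symmetric]
    by (intro mult_le_mono2 sum_comp_le_fibre_card finite_close_pairs finite_truncated_pairs
        card_shrink_fibre_le) (auto intro: shrink_mem_truncated_pairs)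
  also have "\<dots> = m * (3 * s * (q + 1) * (\<Sum>W\<in>Ws. card {y \<in> truncated_pairs. fst y \<union> snd y \<subseteq> W}))"
    using sum_card_filter_swap[OF \<open>finite Ws\<close> finite_truncated_pairs, of "\<lambda>W y. fst y \<union> snd y \<subseteq> W"]
    by (simp add: n_def)
  also have "\<dots> \<le> m * (3 * s * (q + 1) * (\<Sum>W\<in>Ws. m ^ (2 * r - 1)))"
    using card_truncated_pairs_within_le by (intro mult_le_mono2 sum_mono) (auto simp: Ws_def)
  also have "\<dots> = card Ws * (3 * s * (q + 1) * m ^ (2 * r))"
    unfolding power_double_r by (simp only: sum_constant of_nat_id ac_simps)
  finally show ?thesis .
qed

lemma exists_subset_few_close_pairs:
  assumes "m \<le> card V"
  obtains W where "W \<subseteq> V" "card W = m"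
    "card V * card {p \<in> close_pairs. fst p \<union> snd p \<subseteq> W} \<le> 3 * s * (q + 1) * m ^ (2 * r)"
proof -
  define Ws where "Ws = {W. W \<subseteq> V \<and> card W = m}"
  have "finite Ws" "Ws \<noteq> {}"
    using obtain_subset_with_card_n[OF assms] by (auto simp: Ws_def)
  then obtain W where "W \<in> Ws" and W: "card {p \<in> close_pairs. fst p \<union> snd p \<subseteq> W} * card Ws
      \<le> (\<Sum>W\<in>Ws. card {p \<in> close_pairs. fst p \<union> snd p \<subseteq> W})"
    using ex_mult_card_le_sum[OF \<open>finite Ws\<close> \<open>Ws \<noteq> {}\<close>,
        of "\<lambda>W. card {p \<in> close_pairs. fst p \<union> snd p \<subseteq> W}"] by blast
  have "card Ws * (card V * card {p \<in> close_pairs. fst p \<union> snd p \<subseteq> W})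
      \<le> card V * (\<Sum>W\<in>Ws. card {p \<in> close_pairs. fst p \<union> snd p \<subseteq> W})"
    using mult_le_mono2[OF W, of "card V"] by (simp only: ac_simps)
  also have "\<dots> \<le> card Ws * (3 * s * (q + 1) * m ^ (2 * r))"
    using sum_card_close_pairs_within_le[OF assms] unfolding Ws_def .
  finally have "card V * card {p \<in> close_pairs. fst p \<union> snd p \<subseteq> W} \<le> 3 * s * (q + 1) * m ^ (2 * r)"
    using \<open>finite Ws\<close> \<open>Ws \<noteq> {}\<close> by (simp only: mult_le_cancel1 card_gt_0_iff) simp
  with \<open>W \<in> Ws\<close> show thesis
    using that unfolding Ws_def by blast
qed

lemma exists_separated_subset:
  assumes "V \<noteq> {}" "m \<le> card V" "6 * s * (q + 1) * m ^ (2 * r - 1) \<le> card V"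
  shows "\<exists>U\<subseteq>V. separated U \<and> m \<le> 2 * card U"
proof -
  obtain W where W: "W \<subseteq> V" "card W = m"
    and few: "card V * card {p \<in> close_pairs. fst p \<union> snd p \<subseteq> W} \<le> 3 * s * (q + 1) * m ^ (2 * r)"
    using exists_subset_few_close_pairs[OF assms(2)] .
  define E where "E = snd ` {p \<in> close_pairs. fst p \<union> snd p \<subseteq> W}"
  have "card E \<le> card {p \<in> close_pairs. fst p \<union> snd p \<subseteq> W}"
    unfolding E_def using finite_close_pairs by (intro card_image_le) simp
  then have "card V * card E \<le> card V * card {p \<in> close_pairs. fst p \<union> snd p \<subseteq> W}"
    by (rule mult_le_mono2)
  then have "card V * (2 * card E) \<le> 2 * (3 * s * (q + 1) * m ^ (2 * r))"
    using few by linarith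
  also have "\<dots> = m * (6 * s * (q + 1) * m ^ (2 * r - 1))"
    unfolding power_double_r by simp
  also have "\<dots> \<le> m * card V"
    using assms(3) by simp
  finally have "2 * card E \<le> m"
    using assms(1) finite_V by (simp add: mult.commute card_gt_0_iff)
  have "{} \<notin> E" "finite E"
    using r_pos finite_close_pairs by (auto simp: E_def close_pairs_def)
  moreover have "finite W"
    using W(1) finite_V by (rule finite_subset)
  ultimately obtain U where "U \<subseteq> W" "card W \<le> card U + card E" and U: "\<forall>e\<in>E. \<not> e \<subseteq> U"
    using ex_subset_containing_none[of W E] by blast
  have "separated U"
    unfolding separated_def
  proof (intro allI impI notI)
    fix f f' assume "f \<subseteq> U \<and> card f = r \<and> f' \<subseteq> U \<and> card f' = r \<and> f \<noteq> f'" "coord_close \<gamma> s f f'"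
    then have "(f, f') \<in> {p \<in> close_pairs. fst p \<union> snd p \<subseteq> W}" and "f' \<subseteq> U"
      using \<open>U \<subseteq> W\<close> W(1) by (auto simp: close_pairs_def)
    moreover from this(1) have "f' \<in> E"
      unfolding E_def by (rule rev_image_eqI) simp
    ultimately show False
      using U by blast
  qed
  moreover have "m \<le> 2 * card U"
    using W(2) \<open>card W \<le> card U + card E\<close> \<open>2 * card E \<le> m\<close> by linarith
  ultimately show ?thesis
    using \<open>U \<subseteq> W\<close> W(1) by blast
qed

lemma separated_subsingleton: "U \<subseteq> {v} \<Longrightarrow> separated U"
  using r_pos by (auto simp: separated_def subset_singleton_iff)

lemma separated_imp_far:
  assumes "separated U" "f \<subseteq> U" "card f = r" "f' \<subseteq> U" "card f' = r" "f \<noteq> f'" "i < s"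
  shows "1 \<le> \<bar>\<gamma> f i - \<gamma> f' i\<bar>"
proof -
  have "\<not> coord_close \<gamma> s f f'"
    using assms(1-6) unfolding separated_def by blast
  with \<open>i < s\<close> show ?thesis
    unfolding coord_close_def by (meson leI)
qed

lemma exists_nonempty_separated_subset:
  assumes "V \<noteq> {}" "m \<le> card V" "6 * s * (q + 1) * m ^ (2 * r - 1) \<le> card V"
  obtains U where "U \<subseteq> V" "separated U" "m \<le> 2 * card U" "1 \<le> card U"
proof (cases "m = 0")
  case True
  obtain v where "v \<in> V"
    using assms(1) by blast
  with True show thesis
    using that[of "{v}"] separated_subsingleton[OF subset_refl] by simp
next
  case False
  obtain U where "U \<subseteq> V" "separated U" "m \<le> 2 * card U"
    using exists_separated_subset[OF assms] by blast
  with False show thesis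
    using that[of U] by simp
qed

lemma exists_large_separated_subset:
  assumes "0 < s"
  shows "\<exists>U\<subseteq>V. separated U \<and>
    real (card V) powr (1 / (2 * real r - 1)) \<le> 3 * real (6 * s * (q + 1)) * card U"
proof (cases "V = {}")
  case True
  then show ?thesis
    using separated_subsingleton[OF empty_subsetI] by (intro exI[of _ "{}"]) simp
next
  case False
  define D where "D = real (6 * s * (q + 1))"
  define k where "k = 2 * r - 1"
  define m where "m = nat \<lfloor>(card V / D) powr (1 / k)\<rfloor>"
  have "1 \<le> 6 * s * (q + 1)"
    using assms by simp
  then have "1 \<le> D"
    unfolding D_def by (metis of_nat_1 of_nat_le_iff)
  moreover have "0 < real (card V)" "0 < k"
    using False r_pos finite_V by (auto simp: k_def card_gt_0_iff)
  ultimately have bounds: "D * real m ^ k \<le> card V" "card V powr (1 / k) < (real m + 1) * D"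
    unfolding m_def by (rule floor_root_bounds)+
  have big: "6 * s * (q + 1) * m ^ k \<le> card V"
    using bounds(1) unfolding D_def by (metis of_nat_le_iff of_nat_mult of_nat_power)
  have "m \<le> 1 * m ^ k"
    using \<open>0 < k\<close> by (cases "m = 0") (auto intro: self_le_power)
  also have "\<dots> \<le> 6 * s * (q + 1) * m ^ k"
    using assms by (intro mult_le_mono1) simp
  finally have "m \<le> card V"
    using big by (rule order_trans)
  obtain U where U: "U \<subseteq> V" "separated U" "m \<le> 2 * card U" "1 \<le> card U"
    by (rule exists_nonempty_separated_subset[OF False \<open>m \<le> card V\<close> big[unfolded k_def]])
  have "real k = 2 * real r - 1"
    using r_pos by (simp add: k_def of_nat_diff)
  with bounds(2) have "real (card V) powr (1 / (2 * real r - 1)) < (real m + 1) * D"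
    by (simp only:)
  also have "\<dots> \<le> 3 * D * real (card U)"
  proof -
    have "real (m + 1) \<le> real (3 * card U)"
      using U(3,4) by (intro of_nat_mono) linarith
    then have "real m + 1 \<le> 3 * real (card U)"
      by simp
    then show ?thesis
      using mult_right_mono[of _ _ D] \<open>1 \<le> D\<close> by (simp add: ac_simps)
  qed
  finally show ?thesis
    using U(1,2) less_imp_le unfolding D_def by blast
qed

end

theorem lemma2p7:
  fixes r s q :: nat
  assumes "r > 0" and "s > 0" and "q > 0"
  shows "\<exists>c::real. c > 0 \<and>
    (\<forall>(V :: nat set) (\<gamma> :: nat set \<Rightarrow> nat \<Rightarrow> real).
      finite V \<longrightarrow>
      (\<forall>f. f \<subseteq> V \<and> card f = r \<longrightarrow>
         card {f'. f' \<subseteq> V \<and> card f' = r \<and> card (f \<inter> f') = r - 1 \<and>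
                   (\<exists>i<s. \<bar>\<gamma> f i - \<gamma> f' i\<bar> < 1)} \<le> q) \<longrightarrow>
      (\<exists>U. U \<subseteq> V \<and> real (card U) \<ge> c * real (card V) powr (1 / (2 * real r - 1)) \<and>
         (\<forall>f f'. f \<subseteq> U \<and> card f = r \<and> f' \<subseteq> U \<and> card f' = r \<and> f \<noteq> f' \<longrightarrow>
            (\<forall>i<s. \<bar>\<gamma> f i - \<gamma> f' i\<bar> \<ge> 1))))"
proof -
  define D where "D = real (6 * s * (q + 1))"
  have "0 < D"
    using assms(2) unfolding D_def by (simp only: of_nat_0_less_iff) simp
  show ?thesis
  proof (intro exI[of _ "1 / (3 * D)"] conjI allI impI)
    show "0 < 1 / (3 * D)" using \<open>0 < D\<close> by simp
    fix V :: "nat set" and \<gamma> :: "nat set \<Rightarrow> nat \<Rightarrow> real"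
    assume "finite V" and few: "\<forall>f. f \<subseteq> V \<and> card f = r \<longrightarrow>
         card {f'. f' \<subseteq> V \<and> card f' = r \<and> card (f \<inter> f') = r - 1 \<and>
                   (\<exists>i<s. \<bar>\<gamma> f i - \<gamma> f' i\<bar> < 1)} \<le> q"
    interpret few_close_neighbours V \<gamma> r s q
      using \<open>finite V\<close> assms(1) few unfolding few_close_neighbours_def coord_close_def by blast
    obtain U where "U \<subseteq> V" "separated U"
      and large: "real (card V) powr (1 / (2 * real r - 1)) \<le> 3 * D * card U"
      using exists_large_separated_subset[OF assms(2)] unfolding D_def by blast
    have "1 / (3 * D) * real (card V) powr (1 / (2 * real r - 1)) \<le> card U"
      using mult_left_mono[OF large, of "1 / (3 * D)"] \<open>0 < D\<close> by simp
    with \<open>U \<subseteq> V\<close> show "\<exists>U. U \<subseteq> V \<and> real (card U) \<ge> 1 / (3 * D) * real (card V) powr (1 / (2 * real r - 1)) \<and>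
        (\<forall>f f'. f \<subseteq> U \<and> card f = r \<and> f' \<subseteq> U \<and> card f' = r \<and> f \<noteq> f' \<longrightarrow>
          (\<forall>i<s. \<bar>\<gamma> f i - \<gamma> f' i\<bar> \<ge> 1))"
      using separated_imp_far[OF \<open>separated U\<close>] by blast
  qed
qed

end
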